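(* Let $h,p,K>0$, $H(x)=h\max(x,0)+p\max(-x,0)$, and $\delta(u)=1$ if $u>0$, $\delta(u)=0$ if $u=0$. Fix an initial inventory $x_0\in\mathbb{R}$ and an infinite demand sample path $\omega=(d_1,d_2,\dots)$ of nonnegative demands. For $N\ge1$ and $u_1\ge0$ let \[J_N(u_1,\omega)=H(x_1)+K\delta(u_1)+\min_{u_2,\dots,u_N\ge 0}\sum_{i=2}^N\big(H(x_i)+K\delta(u_i)\big),\quad x_i=x_{i-1}-d_i+u_i,\ i=1,\dots,N,\] and let $J(u_1,\omega)=\lim_{N\to\infty}\frac1N J_N(u_1,\omega)$, assumed to exist (finite) for every $u_1>0$. Then $J(u_1,\omega)$ is convex in $u_1$ on $u_1>0$.
   Context: Periodic-review inventory model with fixed setup cost $K$, holding cost rate $h$, backlog penalty rate $p$ and full backlogging; $J(u_1,\omega)$ is the infinite-horizon average cost along sample path $\omega$ when the first-period order is $u_1$ and later orders are chosen optimally. *)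

theory Defs
  imports "HOL-Analysis.Analysis"
begin

definition Hcost :: "real \<Rightarrow> real \<Rightarrow> real \<Rightarrow> real" where
  "Hcost h p x = h * max x 0 + p * max (- x) 0"

definition setup_ind :: "real \<Rightarrow> real" where
  "setup_ind u = (if u > 0 then 1 else 0)"

text \<open>Inventory level after period i: x_i = x_{i-1} - d_i + u_i, i.e.
  x_i = x0 + sum_{k=1..i} (u_k - d_k). Demands d and orders u are indexed from 1.\<close>
definition inv_level :: "real \<Rightarrow> (nat \<Rightarrow> real) \<Rightarrow> (nat \<Rightarrow> real) \<Rightarrow> nat \<Rightarrow> real" where
  "inv_level x0 d u i = x0 + (\<Sum>k=1..i. u k - d k)"

definition period_cost :: "real \<Rightarrow> real \<Rightarrow> real \<Rightarrow> real \<Rightarrow> (nat \<Rightarrow> real) \<Rightarrow> (nat \<Rightarrow> real) \<Rightarrow> nat \<Rightarrow> real" where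
  "period_cost h p K x0 d u i = Hcost h p (inv_level x0 d u i) + K * setup_ind (u i)"

text \<open>J_N(u1, omega): first order fixed to u1, orders u_2..u_N >= 0 chosen optimally
  (the minimum is written as an infimum over all nonnegative order sequences u with u 1 = u1;
  only u_2..u_N affect the value).\<close>
definition JN :: "real \<Rightarrow> real \<Rightarrow> real \<Rightarrow> real \<Rightarrow> (nat \<Rightarrow> real) \<Rightarrow> nat \<Rightarrow> real \<Rightarrow> real" where
  "JN h p K x0 d N u1 =
     (INF u \<in> {u. u 1 = u1 \<and> (\<forall>i. 0 \<le> u i)}. \<Sum>i=1..N. period_cost h p K x0 d u i)"

end

theory Submission
  imports Defs
begin

text \<open>Let \<open>S\<^sub>i = d\<^sub>1 + \<dots> + d\<^sub>i\<close> be the cumulative demand. If \<open>S\<close> is bounded, with limit \<open>D\<close>, then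
  \<open>J(u\<^sub>1) = h max(x\<^sub>0 + u\<^sub>1 - D, 0)\<close>: the inventory never drops below \<open>x\<^sub>0 + u\<^sub>1 - D\<close>, and ordering
  up to \<open>D\<close> in the second period attains this value asymptotically. If \<open>S\<close> is
  unbounded, \<open>J\<close> does not depend on \<open>u\<^sub>1\<close>: any schedule starting with \<open>b\<close> is matched, up to a
  cost independent of the horizon, by a schedule that starts with \<open>a\<close>, waits until the
  demand has used up \<open>x\<^sub>0 + a\<close>, and from then on keeps its cumulative order at
  \<open>max(a, cumulative order of the given schedule)\<close>.\<close>

lemma Hcost_nonneg: "0 \<le> h \<Longrightarrow> 0 \<le> p \<Longrightarrow> 0 \<le> Hcost h p x"
  unfolding Hcost_def by simp

lemma Hcost_antimono_nonpos:
  "0 \<le> p \<Longrightarrow> x \<le> y \<Longrightarrow> y \<le> 0 \<Longrightarrow> Hcost h p y \<le> Hcost h p x"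
  unfolding Hcost_def by (simp add: mult_left_mono)

lemma Hcost_ge_holding: "0 \<le> p \<Longrightarrow> h * max x 0 \<le> Hcost h p x"
  unfolding Hcost_def by simp

lemma period_cost_nonneg: "0 \<le> h \<Longrightarrow> 0 \<le> p \<Longrightarrow> 0 \<le> K \<Longrightarrow> 0 \<le> period_cost h p K x0 d u i"
  unfolding period_cost_def setup_ind_def using Hcost_nonneg by simp

lemma inv_level_eq_sums: "inv_level x0 d u i = x0 + (\<Sum>k=1..i. u k) - (\<Sum>k=1..i. d k)"
  by (simp add: inv_level_def sum_subtractf)

lemma incseq_cumulative_sum:
  fixes d :: "nat \<Rightarrow> real"
  assumes "\<And>i. 1 \<le> i \<Longrightarrow> 0 \<le> d i"
  shows "incseq (\<lambda>i. \<Sum>k=1..i. d k)"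
  by (rule incseq_SucI) (simp add: assms)

lemma JN_le_schedule_cost:
  assumes "0 \<le> h" "0 \<le> p" "0 \<le> K" "u 1 = a" "\<And>i. 0 \<le> u i"
  shows "JN h p K x0 d N a \<le> (\<Sum>i=1..N. period_cost h p K x0 d u i)"
  unfolding JN_def
proof (rule cINF_lower)
  show "bdd_below ((\<lambda>u. \<Sum>i=1..N. period_cost h p K x0 d u i) ` {u. u 1 = a \<and> (\<forall>i. 0 \<le> u i)})"
    by (rule bdd_belowI[where m=0]) (auto intro!: sum_nonneg period_cost_nonneg assms)
qed (use assms in auto)

lemma JN_greatest:
  assumes "0 \<le> a"
    and "\<And>u. u 1 = a \<Longrightarrow> \<forall>i. 0 \<le> u i \<Longrightarrow> c \<le> (\<Sum>i=1..N. period_cost h p K x0 d u i)"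
  shows "c \<le> JN h p K x0 d N a"
  unfolding JN_def
proof (rule cINF_greatest)
  show "{u. u 1 = a \<and> (\<forall>i. 0 \<le> u i)} \<noteq> {}"
    using assms(1) by (auto intro!: exI[where x="\<lambda>i. if i = 1 then a else 0"])
qed (use assms in auto)

lemma sum_le_sum_add_initial:
  fixes f g c :: "nat \<Rightarrow> real"
  assumes "\<And>i. 1 \<le> i \<Longrightarrow> i \<le> M \<Longrightarrow> f i \<le> g i + c i"
    and "\<And>i. M < i \<Longrightarrow> f i \<le> g i" and "\<And>i. 0 \<le> c i"
  shows "(\<Sum>i=1..N. f i) \<le> (\<Sum>i=1..N. g i) + (\<Sum>i=1..M. c i)"
proof -
  define c' where "c' i = (if i \<le> M then c i else 0)" for i
  have "(\<Sum>i=1..N. f i) \<le> (\<Sum>i=1..N. g i + c' i)"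
    by (rule sum_mono) (simp add: c'_def assms)
  also have "\<dots> = (\<Sum>i=1..N. g i) + (\<Sum>i=1..N. c' i)"
    by (rule sum.distrib)
  also have "(\<Sum>i=1..N. c' i) \<le> (\<Sum>i=1..max N M. c' i)"
    by (rule sum_mono2) (auto simp: c'_def assms)
  also have "\<dots> = (\<Sum>i=1..M. c i)"
    by (rule sum.mono_neutral_cong_right) (auto simp: c'_def)
  finally show ?thesis by simp
qed

lemma lim_le_lim_add_const_over_n:
  fixes f g :: "nat \<Rightarrow> real"
  assumes "convergent f" "convergent g" "\<And>N. 1 \<le> N \<Longrightarrow> f N \<le> g N + C / real N"
  shows "lim f \<le> lim g"
proof -
  have "f \<longlonglongrightarrow> lim f" using assms(1) convergent_LIMSEQ_iff by auto
  moreover have "(\<lambda>N. g N + C / real N) \<longlonglongrightarrow> lim g + 0"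
    using assms(2) convergent_LIMSEQ_iff by (intro tendsto_add lim_const_over_n) auto
  moreover have "\<exists>N0. \<forall>N\<ge>N0. f N \<le> g N + C / real N" using assms(3) by auto
  ultimately have "lim f \<le> lim g + 0" by (rule LIMSEQ_le)
  then show ?thesis by simp
qed

lemma convex_on_cong:
  fixes f g :: "real \<Rightarrow> real"
  assumes g: "convex_on A g" and eq: "\<And>x. x \<in> A \<Longrightarrow> f x = g x"
  shows "convex_on A f"
proof (rule convex_onI)
  show A: "convex A" using g by (rule convex_on_imp_convex)
  fix t x y :: real assume t: "0 < t" "t < 1" and xy: "x \<in> A" "y \<in> A"
  have "(1 - t) *\<^sub>R x + t *\<^sub>R y \<in> A" using A xy t by (simp add: convex_alt)
  then show "f ((1 - t) *\<^sub>R x + t *\<^sub>R y) \<le> (1 - t) * f x + t * f y"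
    using convex_onD[OF g, of t x y] t xy eq by simp
qed

lemma convex_on_max_shift_zero:
  fixes c :: real
  assumes "convex A"
  shows "convex_on A (\<lambda>x. max (c + x) 0)"
proof (rule convex_onI)
  fix t x y :: real assume t: "0 < t" "t < 1"
  have "c + ((1 - t) *\<^sub>R x + t *\<^sub>R y) = (1 - t) * (c + x) + t * (c + y)"
    by (simp add: algebra_simps)
  moreover have "(1 - t) * (c + x) \<le> (1 - t) * max (c + x) 0" "t * (c + y) \<le> t * max (c + y) 0"
    using t by (auto intro: mult_left_mono)
  moreover have "0 \<le> (1 - t) * max (c + x) 0" "0 \<le> t * max (c + y) 0"
    using t by auto
  ultimately show "max (c + ((1 - t) *\<^sub>R x + t *\<^sub>R y)) 0 \<le> (1 - t) * max (c + x) 0 + t * max (c + y) 0"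
    by linarith
qed (rule assms)

definition catch_up_total :: "real \<Rightarrow> nat \<Rightarrow> (nat \<Rightarrow> real) \<Rightarrow> nat \<Rightarrow> real" where
  "catch_up_total a T u i = (if i = 0 then 0 else if i < T then a else max a (\<Sum>k=1..i. u k))"

definition catch_up :: "real \<Rightarrow> nat \<Rightarrow> (nat \<Rightarrow> real) \<Rightarrow> nat \<Rightarrow> real" where
  "catch_up a T u i = catch_up_total a T u i - catch_up_total a T u (i - 1)"

lemma sum_catch_up: "(\<Sum>k=1..i. catch_up a T u k) = catch_up_total a T u i"
  by (induction i) (auto simp: catch_up_def catch_up_total_def)

lemma catch_up_first: "2 \<le> T \<Longrightarrow> catch_up a T u 1 = a"
  by (simp add: catch_up_def catch_up_total_def)

lemma catch_up_nonneg:
  assumes "0 \<le> a" "\<And>i. 0 \<le> u i"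
  shows "0 \<le> catch_up a T u i"
proof -
  have "(\<Sum>k=1..i - 1. u k) \<le> (\<Sum>k=1..i. u k)"
    by (rule sum_mono2) (auto simp: assms)
  then show ?thesis
    using assms(1) by (auto simp: catch_up_def catch_up_total_def max_def)
qed

lemma catch_up_le:
  assumes "1 \<le> T" "T < i" "0 \<le> u i"
  shows "catch_up a T u i \<le> u i"
proof -
  have "(\<Sum>k=1..i. u k) = (\<Sum>k=1..i - 1. u k) + u i"
    using assms(2) by (cases i) auto
  then show ?thesis
    using assms by (auto simp: catch_up_def catch_up_total_def max_def)
qed

text \<open>Once the demand has consumed \<open>x\<^sub>0 + a\<close>, both inventories are either equal or nonpositive with
  the catch-up one the larger.\<close>
lemma Hcost_catch_up_le:
  assumes "0 \<le> p" "1 \<le> i" "T \<le> i" "x0 + a \<le> (\<Sum>k=1..i. d k)"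
  shows "Hcost h p (inv_level x0 d (catch_up a T u) i) \<le> Hcost h p (inv_level x0 d u i)"
proof (cases "a \<le> (\<Sum>k=1..i. u k)")
  case True
  then show ?thesis
    using assms(2,3) unfolding inv_level_eq_sums sum_catch_up by (simp add: catch_up_total_def)
next
  case False
  then show ?thesis
    using assms unfolding inv_level_eq_sums sum_catch_up
    by (intro Hcost_antimono_nonpos) (auto simp: catch_up_total_def)
qed

lemma period_cost_catch_up_le:
  assumes "0 \<le> h" "0 \<le> p" "0 \<le> K" "0 \<le> a" "\<And>i. 0 \<le> u i" "1 \<le> i" "1 \<le> T"
    and "T \<le> i \<Longrightarrow> x0 + a \<le> (\<Sum>k=1..i. d k)"
  shows "period_cost h p K x0 d (catch_up a T u) i \<le> period_cost h p K x0 d u i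
    + (if i \<le> T then Hcost h p (x0 + a - (\<Sum>k=1..i. d k)) + K else 0)"
proof -
  have setup_le: "K * setup_ind (catch_up a T u i) \<le> K"
    using assms(3) by (simp add: setup_ind_def)
  have u_nonneg: "0 \<le> period_cost h p K x0 d u i"
    using assms(1-3) by (rule period_cost_nonneg)
  consider "i < T" | "i = T" | "T < i" by linarith
  then show ?thesis
  proof cases
    case 1
    then have "inv_level x0 d (catch_up a T u) i = x0 + a - (\<Sum>k=1..i. d k)"
      using assms(6) unfolding inv_level_eq_sums sum_catch_up by (simp add: catch_up_total_def)
    then show ?thesis
      using 1 setup_le u_nonneg by (simp add: period_cost_def)
  next
    case 2
    have "0 \<le> K * setup_ind (u i)" "0 \<le> Hcost h p (x0 + a - (\<Sum>k=1..i. d k))"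
      using assms(1-3) Hcost_nonneg by (auto simp: setup_ind_def)
    then show ?thesis
      using 2 Hcost_catch_up_le[of p i T x0 a d h u] assms setup_le
      unfolding period_cost_def by simp
  next
    case 3
    have "0 \<le> catch_up a T u i" "catch_up a T u i \<le> u i"
      using assms(4,5,7) 3 by (simp_all add: catch_up_nonneg catch_up_le)
    then have "K * setup_ind (catch_up a T u i) \<le> K * setup_ind (u i)"
      using assms(3) by (simp add: setup_ind_def)
    then show ?thesis
      using 3 Hcost_catch_up_le[of p i T x0 a d h u] assms by (simp add: period_cost_def)
  qed
qed

lemma JN_le_JN_add_const:
  fixes d :: "nat \<Rightarrow> real"
  assumes "0 \<le> h" "0 \<le> p" "0 \<le> K" "\<And>i. 1 \<le> i \<Longrightarrow> 0 \<le> d i"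
    and "\<not> bdd_above (range (\<lambda>i. \<Sum>k=1..i. d k))" and "0 \<le> a" "0 \<le> b"
  shows "\<exists>C. \<forall>N. JN h p K x0 d N a \<le> JN h p K x0 d N b + C"
proof -
  define S where "S i = (\<Sum>k=1..i. d k)" for i
  obtain T1 where T1: "x0 + a < S T1"
    using assms(5) unfolding S_def by (meson bdd_aboveI2 not_le)
  define T where "T = max T1 2"
  have "T1 \<le> T" "2 \<le> T" unfolding T_def by simp_all
  have "incseq S"
    unfolding S_def using assms(4) by (rule incseq_cumulative_sum)
  then have tail: "x0 + a \<le> S i" if "T \<le> i" for i
    using T1 that \<open>T1 \<le> T\<close> by (meson incseqD less_imp_le order.trans)
  define c where "c i = (if i \<le> T then Hcost h p (x0 + a - S i) + K else 0)" for i
  have c_nonneg: "0 \<le> c i" for i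
    unfolding c_def using Hcost_nonneg assms(1-3) by simp
  have "JN h p K x0 d N a - (\<Sum>i=1..T. c i) \<le> JN h p K x0 d N b" for N
  proof (rule JN_greatest[OF assms(7)])
    fix u :: "nat \<Rightarrow> real" assume u: "u 1 = b" "\<forall>i. 0 \<le> u i"
    have "JN h p K x0 d N a \<le> (\<Sum>i=1..N. period_cost h p K x0 d (catch_up a T u) i)"
      using assms(1-3,6) u \<open>2 \<le> T\<close>
      by (intro JN_le_schedule_cost catch_up_first catch_up_nonneg) auto
    also have "\<dots> \<le> (\<Sum>i=1..N. period_cost h p K x0 d u i) + (\<Sum>i=1..T. c i)"
    proof (rule sum_le_sum_add_initial[OF _ _ c_nonneg])
      show per: "period_cost h p K x0 d (catch_up a T u) i \<le> period_cost h p K x0 d u i + c i"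
        if "1 \<le> i" for i
        using period_cost_catch_up_le[of h p K a u i T x0 d] assms u \<open>2 \<le> T\<close> tail that
        unfolding c_def S_def by auto
      show "period_cost h p K x0 d (catch_up a T u) i \<le> period_cost h p K x0 d u i"
        if "T < i" for i
        using per[of i] that \<open>2 \<le> T\<close> by (simp add: c_def)
    qed
    finally show "JN h p K x0 d N a - (\<Sum>i=1..T. c i) \<le> (\<Sum>i=1..N. period_cost h p K x0 d u i)"
      by simp
  qed
  then show ?thesis by (intro exI[of _ "\<Sum>i=1..T. c i"]) (simp add: algebra_simps)
qed

lemma JN_ge_bounded_demand:
  assumes "0 \<le> h" "0 \<le> p" "0 \<le> K" "0 \<le> a" "\<And>i. (\<Sum>k=1..i. d k) \<le> D"
  shows "real N * (h * max (x0 + a - D) 0) \<le> JN h p K x0 d N a"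
proof (rule JN_greatest[OF assms(4)])
  fix u :: "nat \<Rightarrow> real" assume u: "u 1 = a" "\<forall>i. 0 \<le> u i"
  have "h * max (x0 + a - D) 0 \<le> period_cost h p K x0 d u i" if "i \<in> {1..N}" for i
  proof -
    have "u 1 \<le> (\<Sum>k=1..i. u k)"
      by (rule member_le_sum) (use that u in auto)
    then have "x0 + a - D \<le> inv_level x0 d u i"
      using assms(5)[of i] u by (simp add: inv_level_eq_sums)
    then have "h * max (x0 + a - D) 0 \<le> h * max (inv_level x0 d u i) 0"
      using assms(1) by (intro mult_left_mono) auto
    also have "\<dots> \<le> Hcost h p (inv_level x0 d u i)"
      using assms(2) by (rule Hcost_ge_holding)
    finally show ?thesis
      using assms(3) by (simp add: period_cost_def setup_ind_def)
  qed
  then have "(\<Sum>i=1..N. h * max (x0 + a - D) 0) \<le> (\<Sum>i=1..N. period_cost h p K x0 d u i)"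
    by (rule sum_mono)
  then show "real N * (h * max (x0 + a - D) 0) \<le> (\<Sum>i=1..N. period_cost h p K x0 d u i)"
    by simp
qed

text \<open>The witness orders \<open>a\<close>, tops up to the total demand \<open>D\<close> in period 2, and orders nothing
  afterwards; from period \<open>M\<close> on its cost is within \<open>h e\<close> of the lower bound.\<close>
lemma JN_le_bounded_demand:
  assumes "0 \<le> h" "0 \<le> p" "0 \<le> K" "0 \<le> a" "0 \<le> e"
    and "\<And>i. (\<Sum>k=1..i. d k) \<le> D" "\<And>i. M \<le> i \<Longrightarrow> D - e \<le> (\<Sum>k=1..i. d k)"
  shows "\<exists>C. \<forall>N. JN h p K x0 d N a \<le> C + real N * (h * (max (x0 + a - D) 0 + e))"
proof -
  define q where "q = h * (max (x0 + a - D) 0 + e)"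
  have "0 \<le> q" unfolding q_def using assms(1,5) by simp
  define w where "w i = (if i = 1 then a else if i = 2 then max 0 (D - (x0 + a)) else 0)" for i :: nat
  have w_nonneg: "0 \<le> w i" for i using assms(4) by (simp add: w_def)
  have sum_w: "(\<Sum>k=1..i. w k) = a + max 0 (D - (x0 + a))" if "2 \<le> i" for i
    using that
  proof (induction i rule: dec_induct)
    case base
    have "{1..2::nat} = {1,2}" by auto
    then show ?case by (simp add: w_def)
  qed (simp add: w_def)
  define M' where "M' = max M 3"
  have tail: "period_cost h p K x0 d w i \<le> q" if "M' < i" for i
  proof -
    have i: "3 < i" "M < i" using that unfolding M'_def by auto
    have "inv_level x0 d w i = max (x0 + a) D - (\<Sum>k=1..i. d k)"
      using sum_w[of i] i by (simp add: inv_level_eq_sums max_def)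
    then have "0 \<le> inv_level x0 d w i" "inv_level x0 d w i \<le> max (x0 + a - D) 0 + e"
      using assms(6)[of i] assms(7)[of i] i by auto
    then have "Hcost h p (inv_level x0 d w i) \<le> q"
      unfolding q_def Hcost_def using assms(1) by (simp add: mult_left_mono)
    moreover have "w i = 0" using i by (simp add: w_def)
    ultimately show ?thesis by (simp add: period_cost_def setup_ind_def)
  qed
  have "JN h p K x0 d N a \<le> (\<Sum>i=1..M'. period_cost h p K x0 d w i) + real N * q" for N
  proof -
    have "JN h p K x0 d N a \<le> (\<Sum>i=1..N. period_cost h p K x0 d w i)"
      using assms(1-3) w_nonneg by (intro JN_le_schedule_cost) (auto simp: w_def)
    also have "\<dots> \<le> (\<Sum>i=1..N. q) + (\<Sum>i=1..M'. period_cost h p K x0 d w i)"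
      using tail \<open>0 \<le> q\<close> period_cost_nonneg[OF assms(1-3)]
      by (intro sum_le_sum_add_initial) auto
    finally show ?thesis by simp
  qed
  then show ?thesis unfolding q_def by blast
qed

lemma lim_JN_bounded_demand:
  fixes d :: "nat \<Rightarrow> real"
  assumes "0 < h" "0 \<le> p" "0 \<le> K" "0 \<le> a" "\<And>i. 1 \<le> i \<Longrightarrow> 0 \<le> d i"
    and D: "(\<lambda>i. \<Sum>k=1..i. d k) \<longlonglongrightarrow> D"
    and conv: "convergent (\<lambda>N. JN h p K x0 d N a / real N)"
  shows "lim (\<lambda>N. JN h p K x0 d N a / real N) = h * max (x0 + a - D) 0"
proof (rule antisym)
  have "incseq (\<lambda>i. \<Sum>k=1..i. d k)"
    using assms(5) by (rule incseq_cumulative_sum)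
  then have le_D: "(\<Sum>k=1..i. d k) \<le> D" for i
    using incseq_le[OF _ D] by simp
  show "lim (\<lambda>N. JN h p K x0 d N a / real N) \<le> h * max (x0 + a - D) 0"
  proof (rule field_le_epsilon)
    fix e :: real assume "0 < e"
    obtain M where "\<And>i. M \<le> i \<Longrightarrow> D - e / h < (\<Sum>k=1..i. d k)"
      using order_tendstoD(1)[OF D, of "D - e / h"] assms(1) \<open>0 < e\<close>
      unfolding eventually_sequentially by auto
    then have "\<And>i. M \<le> i \<Longrightarrow> D - e / h \<le> (\<Sum>k=1..i. d k)"
      by (simp add: less_imp_le)
    then have "\<exists>C. \<forall>N. JN h p K x0 d N a \<le> C + real N * (h * (max (x0 + a - D) 0 + e / h))"
      using assms(1-4) le_D \<open>0 < e\<close> by (intro JN_le_bounded_demand) auto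
    then obtain C where C: "\<And>N. JN h p K x0 d N a \<le> C + real N * (h * (max (x0 + a - D) 0 + e / h))"
      by blast
    have "lim (\<lambda>N. JN h p K x0 d N a / real N) \<le> lim (\<lambda>N. h * (max (x0 + a - D) 0 + e / h))"
    proof (rule lim_le_lim_add_const_over_n[OF conv convergent_const])
      fix N :: nat assume "1 \<le> N"
      then show "JN h p K x0 d N a / real N \<le> h * (max (x0 + a - D) 0 + e / h) + C / real N"
        using C[of N] by (simp add: field_simps)
    qed
    then show "lim (\<lambda>N. JN h p K x0 d N a / real N) \<le> h * max (x0 + a - D) 0 + e"
      using assms(1) by (simp add: distrib_left)
  qed
  have "lim (\<lambda>_. h * max (x0 + a - D) 0) \<le> lim (\<lambda>N. JN h p K x0 d N a / real N)"
  proof (rule lim_le_lim_add_const_over_n[OF convergent_const conv, where C=0])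
    fix N :: nat assume "1 \<le> N"
    then show "h * max (x0 + a - D) 0 \<le> JN h p K x0 d N a / real N + 0 / real N"
      using JN_ge_bounded_demand[of h p K a d D N x0] assms(1-4) le_D by (simp add: field_simps)
  qed
  then show "h * max (x0 + a - D) 0 \<le> lim (\<lambda>N. JN h p K x0 d N a / real N)"
    by simp
qed

lemma lim_JN_le_unbounded_demand:
  fixes d :: "nat \<Rightarrow> real"
  assumes "0 \<le> h" "0 \<le> p" "0 \<le> K" "\<And>i. 1 \<le> i \<Longrightarrow> 0 \<le> d i"
    and "\<not> bdd_above (range (\<lambda>i. \<Sum>k=1..i. d k))" and "0 \<le> a" "0 \<le> b"
    and "convergent (\<lambda>N. JN h p K x0 d N a / real N)" "convergent (\<lambda>N. JN h p K x0 d N b / real N)"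
  shows "lim (\<lambda>N. JN h p K x0 d N a / real N) \<le> lim (\<lambda>N. JN h p K x0 d N b / real N)"
proof -
  obtain C where C: "\<And>N. JN h p K x0 d N a \<le> JN h p K x0 d N b + C"
    using JN_le_JN_add_const[OF assms(1-7)] by blast
  show ?thesis
  proof (rule lim_le_lim_add_const_over_n[OF assms(8,9)])
    fix N :: nat
    have "JN h p K x0 d N a / real N \<le> (JN h p K x0 d N b + C) / real N"
      using C[of N] by (rule divide_right_mono) simp
    then show "JN h p K x0 d N a / real N \<le> JN h p K x0 d N b / real N + C / real N"
      by (simp add: add_divide_distrib)
  qed
qed

theorem theorem4:
  fixes h p K x0 :: real and d :: "nat \<Rightarrow> real"
  assumes "h > 0" and "p > 0" and "K > 0"
    and "\<And>i. i \<ge> 1 \<Longrightarrow> d i \<ge> 0"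
    and "\<And>u1. u1 > 0 \<Longrightarrow> convergent (\<lambda>N. JN h p K x0 d N u1 / real N)"
  shows "convex_on {0<..} (\<lambda>u1. lim (\<lambda>N. JN h p K x0 d N u1 / real N))"
proof (cases "bdd_above (range (\<lambda>i. \<Sum>k=1..i. d k))")
  case True
  define D where "D = (SUP i. \<Sum>k=1..i. d k)"
  have "(\<lambda>i. \<Sum>k=1..i. d k) \<longlonglongrightarrow> D"
    unfolding D_def using True incseq_cumulative_sum[of d] assms(4) by (blast intro: LIMSEQ_incseq_SUP)
  then have "lim (\<lambda>N. JN h p K x0 d N u1 / real N) = h * max ((x0 - D) + u1) 0" if "u1 \<in> {0<..}" for u1
    using lim_JN_bounded_demand[of h p K u1 d D x0] assms that by (simp add: algebra_simps)
  moreover have "convex_on {0<..} (\<lambda>u1. h * max ((x0 - D) + u1) 0)"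
    using assms(1) by (intro convex_on_cmul convex_on_max_shift_zero) auto
  ultimately show ?thesis
    by (rule convex_on_cong[rotated])
next
  case False
  have "lim (\<lambda>N. JN h p K x0 d N u1 / real N) = lim (\<lambda>N. JN h p K x0 d N 1 / real N)"
    if "u1 \<in> {0<..}" for u1
    using False assms that by (intro antisym lim_JN_le_unbounded_demand) auto
  moreover have "convex_on {0::real<..} (\<lambda>_. lim (\<lambda>N. JN h p K x0 d N 1 / real N))"
    by (simp add: convex_on_const)
  ultimately show ?thesis
    by (rule convex_on_cong[rotated])
qed

end
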